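(* Let $M,\Xi\in\mathbb{R}^{\ell\times\ell}$ be symmetric positive semidefinite, suppose $\operatorname{range}(M)=\mathbb{R}^J:=\operatorname{span}\{e_i:i\in J\}$ for some $J\subseteq\{1,\dots,\ell\}$, $\|\Xi\|_{op}\le\lambda_{\min}(M_{(J)})/2$, and $M+\Xi$ is invertible. Then for $x\in\operatorname{range}(M)$, \[ \big|x^\top(M+\Xi)^{-1}x-x_{(J)}^\top M_{(J)}^{-1}x_{(J)}\big|\le2\|M_{(J)}^{-1}\|_{op}^2\,\|\Xi\|_{op}\,\|x\|^2, \] while for $x\notin\operatorname{range}(M)$, \[ x^\top(M+\Xi)^{-1}x\ge\frac{1}{2\|\Xi\|_{op}}\|x_{(J^c)}\|^2 . \]
   Context: For a vector $x$ and index set $J$, $x_{(J)}$ is the restriction of $x$ to the coordinates in $J$; for a matrix $M$, $M_{(J)}$ is the principal submatrix on $J\times J$; $J^c$ is the complement of $J$; $\lambda_{\min}$ denotes the smallest eigenvalue. *)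

theory Defs
  imports Complex_Main "Jordan_Normal_Form.DL_Submatrix" "Jordan_Normal_Form.Char_Poly"
begin

definition sym_psd :: "nat \<Rightarrow> real mat \<Rightarrow> bool" where
  "sym_psd n A \<longleftrightarrow> A \<in> carrier_mat n n \<and> transpose_mat A = A \<and>
     (\<forall>v \<in> carrier_vec n. 0 \<le> v \<bullet> (A *\<^sub>v v))"

definition vnorm :: "real vec \<Rightarrow> real" where
  "vnorm v = sqrt (v \<bullet> v)"

definition op_norm :: "real mat \<Rightarrow> real" where
  "op_norm A = Sup {vnorm (A *\<^sub>v v) | v. v \<in> carrier_vec (dim_col A) \<and> vnorm v \<le> 1}"

definition lambda_min :: "real mat \<Rightarrow> real" where
  "lambda_min A = Min {k. eigenvalue A k}"

definition mat_inv :: "real mat \<Rightarrow> real mat" where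
  "mat_inv A = (SOME B. B \<in> carrier_mat (dim_row A) (dim_row A) \<and>
       A * B = 1\<^sub>m (dim_row A) \<and> B * A = 1\<^sub>m (dim_row A))"

definition mat_range :: "real mat \<Rightarrow> real vec set" where
  "mat_range A = {A *\<^sub>v y | y. y \<in> carrier_vec (dim_col A)}"

definition coord_subspace :: "nat \<Rightarrow> nat set \<Rightarrow> real vec set" where
  "coord_subspace n J = {x \<in> carrier_vec n. \<forall>i<n. i \<notin> J \<longrightarrow> x $ i = 0}"

(* restriction x_(J) of x to coordinates in J (in increasing order), matching submatrix *)
definition restrict_vec :: "real vec \<Rightarrow> nat set \<Rightarrow> real vec" where
  "restrict_vec x J = vec (card {i. i < dim_vec x \<and> i \<in> J}) (\<lambda>i. x $ pick J i)"

end

theory Submission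
  imports Defs
begin

(* Write |.| for the Euclidean and the operator norm.  If B is symmetric positive semidefinite
   and B w = x, then 2 (y . x) - y . B y <= x . w for every y, with equality at y = w.  Applied to
   M + Xi and to M itself, where M z = x for z the zero extension of M_(J)^-1 x_(J) (M_(J) is
   invertible because the symmetric M has range R^J), this gives
   0 <= x . z - x . (M + Xi)^-1 x <= z . Xi z <= |Xi| |M_(J)^-1|^2 |x|^2.
   For arbitrary x, the test vector y = q / |Xi|, where q is the J^c-part of x and lies in the
   kernel of M, gives x . (M + Xi)^-1 x >= |x_(J^c)|^2 / |Xi|. *)

section \<open>Restriction to and zero extension from a coordinate set\<close>

lemma bij_betw_pick:
  assumes "finite S"
  shows "bij_betw (pick S) {..<card S} S"
proof (rule bij_betw_byWitness[where f' = "\<lambda>i. card {a\<in>S. a < i}"])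
  show "\<forall>k\<in>{..<card S}. card {a\<in>S. a < pick S k} = k" using card_pick_le by auto
  show "\<forall>i\<in>S. pick S (card {a\<in>S. a < i}) = i" using pick_card_in_set by auto
  show "pick S ` {..<card S} \<subseteq> S" using pick_in_set_le by auto
  show "(\<lambda>i. card {a\<in>S. a < i}) ` S \<subseteq> {..<card S}"
    using assms by (auto intro!: psubset_card_mono)
qed

lemma sum_pick:
  assumes "finite S"
  shows "(\<Sum>k<card S. f (pick S k)) = sum f S"
  using sum.reindex_bij_betw[OF bij_betw_pick[OF assms]] .

lemma Collect_less_and_mem_eq: "J \<subseteq> {..<n} \<Longrightarrow> {i. i < n \<and> i \<in> J} = J"
  by auto

lemma restrict_vec_carrier:
  assumes "x \<in> carrier_vec n" "J \<subseteq> {..<n}"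
  shows "restrict_vec x J \<in> carrier_vec (card J)"
  using assms by (simp add: restrict_vec_def Collect_less_and_mem_eq)

lemma restrict_vec_index:
  assumes "x \<in> carrier_vec n" "J \<subseteq> {..<n}" "k < card J"
  shows "restrict_vec x J $ k = x $ pick J k"
  using restrict_vec_carrier[OF assms(1,2)] assms(3) by (simp add: restrict_vec_def)

definition extend_vec :: "nat \<Rightarrow> nat set \<Rightarrow> real vec \<Rightarrow> real vec" where
  "extend_vec n J a = vec n (\<lambda>i. if i \<in> J then a $ card {b\<in>J. b < i} else 0)"

lemma extend_vec_coord_subspace: "extend_vec n J a \<in> coord_subspace n J"
  by (simp add: extend_vec_def coord_subspace_def)

lemma restrict_extend_vec:
  assumes "J \<subseteq> {..<n}" "a \<in> carrier_vec (card J)"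
  shows "restrict_vec (extend_vec n J a) J = a"
proof (rule eq_vecI)
  have ext: "extend_vec n J a \<in> carrier_vec n" by (simp add: extend_vec_def)
  show "dim_vec (restrict_vec (extend_vec n J a) J) = dim_vec a"
    using restrict_vec_carrier[OF ext assms(1)] assms(2) by simp
  fix k assume "k < dim_vec a"
  then have k: "k < card J" using assms(2) by simp
  have "pick J k \<in> J" by (rule pick_in_set_le[OF k])
  then have "extend_vec n J a $ pick J k = a $ k"
    using assms(1) card_pick_le[OF k] by (auto simp: extend_vec_def)
  then show "restrict_vec (extend_vec n J a) J $ k = a $ k"
    using restrict_vec_index[OF ext assms(1) k] by simp
qed

lemma extend_restrict_vec:
  assumes "J \<subseteq> {..<n}" "x \<in> coord_subspace n J"
  shows "extend_vec n J (restrict_vec x J) = x"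
proof (rule eq_vecI)
  have x: "x \<in> carrier_vec n" using assms(2) by (simp add: coord_subspace_def)
  show "dim_vec (extend_vec n J (restrict_vec x J)) = dim_vec x" using x by (simp add: extend_vec_def)
  fix i assume "i < dim_vec x"
  then have i: "i < n" using x by simp
  have "card {b\<in>J. b < i} < card J" if "i \<in> J"
    using that finite_subset[OF assms(1)] by (auto intro!: psubset_card_mono)
  then show "extend_vec n J (restrict_vec x J) $ i = x $ i"
    using i assms(2) by (auto simp: extend_vec_def restrict_vec_index[OF x assms(1)]
        pick_card_in_set coord_subspace_def)
qed

lemma scalar_prod_extend_vec:
  assumes "J \<subseteq> {..<n}" "x \<in> carrier_vec n" "a \<in> carrier_vec (card J)"
  shows "x \<bullet> extend_vec n J a = restrict_vec x J \<bullet> a"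
proof -
  define f where "f i = x $ i * extend_vec n J a $ i" for i
  have "x \<bullet> extend_vec n J a = sum f {..<n}"
    by (simp add: scalar_prod_def f_def extend_vec_def lessThan_atLeast0)
  also have "\<dots> = sum f J"
    using assms(1) by (intro sum.mono_neutral_right) (auto simp: f_def extend_vec_def)
  also have "\<dots> = (\<Sum>k<card J. f (pick J k))"
    using finite_subset[OF assms(1)] by (simp add: sum_pick)
  also have "\<dots> = (\<Sum>k<card J. restrict_vec x J $ k * a $ k)"
  proof (rule sum.cong[OF refl])
    fix k assume "k \<in> {..<card J}"
    then have k: "k < card J" by simp
    then have "pick J k \<in> J" by (rule pick_in_set_le)
    then show "f (pick J k) = restrict_vec x J $ k * a $ k"
      using assms k card_pick_le[OF k] by (auto simp: f_def extend_vec_def restrict_vec_index)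
  qed
  also have "\<dots> = restrict_vec x J \<bullet> a"
    using assms(3) by (simp add: scalar_prod_def lessThan_atLeast0)
  finally show ?thesis .
qed

lemma scalar_prod_restrict_vec:
  assumes "J \<subseteq> {..<n}" "x \<in> carrier_vec n" "z \<in> coord_subspace n J"
  shows "restrict_vec x J \<bullet> restrict_vec z J = x \<bullet> z"
proof -
  have "z \<in> carrier_vec n" using assms(3) by (simp add: coord_subspace_def)
  then have "restrict_vec z J \<in> carrier_vec (card J)" using assms(1) by (rule restrict_vec_carrier)
  then show ?thesis
    using scalar_prod_extend_vec[OF assms(1,2)] extend_restrict_vec[OF assms(1,3)] by metis
qed

lemma scalar_prod_disjoint_coord_subspaces:
  assumes "u \<in> coord_subspace n I" "v \<in> coord_subspace n J" "I \<inter> J = {}"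
  shows "u \<bullet> v = 0"
proof -
  have "u $ i * v $ i = 0" if "i < n" for i
    using assms that by (cases "i \<in> I") (auto simp: coord_subspace_def)
  moreover have "dim_vec v = n" using assms(2) by (simp add: coord_subspace_def)
  ultimately show ?thesis by (auto simp: scalar_prod_def intro!: sum.neutral)
qed

lemma submatrix_carrier:
  assumes "M \<in> carrier_mat m n" "I \<subseteq> {..<m}" "J \<subseteq> {..<n}"
  shows "submatrix M I J \<in> carrier_mat (card I) (card J)"
  using assms by (simp add: submatrix_def Collect_less_and_mem_eq)

lemma row_submatrix:
  assumes "M \<in> carrier_mat n n" "J \<subseteq> {..<n}" "k < card J"
  shows "row (submatrix M J J) k = restrict_vec (row M (pick J k)) J"
proof (rule eq_vecI)
  have row: "row M (pick J k) \<in> carrier_vec n" using row_carrier[of M] assms(1) by simp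
  have A: "submatrix M J J \<in> carrier_mat (card J) (card J)" by (rule submatrix_carrier[OF assms(1,2,2)])
  have card: "card {i. i < n \<and> i \<in> J} = card J" using assms(2) by (simp add: Collect_less_and_mem_eq)
  show "dim_vec (row (submatrix M J J) k) = dim_vec (restrict_vec (row M (pick J k)) J)"
    using A restrict_vec_carrier[OF row assms(2)] by simp
  fix j assume "j < dim_vec (restrict_vec (row M (pick J k)) J)"
  then have j: "j < card J" using restrict_vec_carrier[OF row assms(2)] by simp
  have "pick J k < n" "pick J j < n" using pick_in_set_le[OF assms(3)] pick_in_set_le[OF j] assms(2) by auto
  then have "restrict_vec (row M (pick J k)) J $ j = M $$ (pick J k, pick J j)"
    using restrict_vec_index[OF row assms(2) j] assms(1) by simp
  moreover have "row (submatrix M J J) k $ j = M $$ (pick J k, pick J j)"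
  proof -
    have "row (submatrix M J J) k $ j = submatrix M J J $$ (k, j)" using A assms(3) j by simp
    also have "\<dots> = M $$ (pick J k, pick J j)"
      by (rule submatrix_index) (use assms(1,3) j card in simp_all)
    finally show ?thesis .
  qed
  ultimately show "row (submatrix M J J) k $ j = restrict_vec (row M (pick J k)) J $ j" by simp
qed

lemma restrict_mult_mat_vec:
  assumes "M \<in> carrier_mat n n" "J \<subseteq> {..<n}" "v \<in> coord_subspace n J"
  shows "restrict_vec (M *\<^sub>v v) J = submatrix M J J *\<^sub>v restrict_vec v J"
proof (rule eq_vecI)
  have v: "v \<in> carrier_vec n" using assms(3) by (simp add: coord_subspace_def)
  have Mv: "M *\<^sub>v v \<in> carrier_vec n" using assms(1) v by simp
  have A: "submatrix M J J \<in> carrier_mat (card J) (card J)" by (rule submatrix_carrier[OF assms(1,2,2)])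
  show "dim_vec (restrict_vec (M *\<^sub>v v) J) = dim_vec (submatrix M J J *\<^sub>v restrict_vec v J)"
    using restrict_vec_carrier[OF Mv assms(2)] A by simp
  fix k assume "k < dim_vec (submatrix M J J *\<^sub>v restrict_vec v J)"
  then have k: "k < card J" using A by simp
  then have "pick J k < n" using assms(2) pick_in_set_le[OF k] by auto
  then have "restrict_vec (M *\<^sub>v v) J $ k = row M (pick J k) \<bullet> v"
    using restrict_vec_index[OF Mv assms(2) k] assms(1) by simp
  also have "\<dots> = row (submatrix M J J) k \<bullet> restrict_vec v J"
  proof -
    have "row M (pick J k) \<in> carrier_vec n" using row_carrier[of M] assms(1) by simp
    then show ?thesis
      using scalar_prod_restrict_vec[OF assms(2) _ assms(3)] row_submatrix[OF assms(1,2) k] by simp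
  qed
  also have "\<dots> = (submatrix M J J *\<^sub>v restrict_vec v J) $ k" using A k by simp
  finally show "restrict_vec (M *\<^sub>v v) J $ k = (submatrix M J J *\<^sub>v restrict_vec v J) $ k" .
qed

section \<open>Euclidean norm and operator norm\<close>

lemma scalar_prod_self_nonneg: "0 \<le> (v :: real vec) \<bullet> v"
  unfolding scalar_prod_def by (simp add: sum_nonneg)

lemma scalar_prod_self_eq_0_iff:
  fixes v :: "real vec"
  shows "v \<in> carrier_vec n \<Longrightarrow> v \<bullet> v = 0 \<longleftrightarrow> v = 0\<^sub>v n"
  using conjugate_square_eq_0_vec[of v n] by (simp only: vec_conjugate_real)

lemma vnorm_nonneg: "0 \<le> vnorm v"
  by (simp add: vnorm_def scalar_prod_self_nonneg)

lemma vnorm_power2: "(vnorm v)\<^sup>2 = v \<bullet> v"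
  using scalar_prod_self_nonneg[of v] by (simp add: vnorm_def)

lemma vnorm_smult: "vnorm (c \<cdot>\<^sub>v v) = \<bar>c\<bar> * vnorm v"
proof -
  have "(c \<cdot>\<^sub>v v) \<bullet> (c \<cdot>\<^sub>v v) = c\<^sup>2 * (v \<bullet> v)" by (simp add: power2_eq_square)
  then show ?thesis by (simp add: vnorm_def real_sqrt_mult)
qed

lemma Cauchy_Schwarz_scalar_prod:
  fixes u v :: "real vec"
  assumes u: "u \<in> carrier_vec n" and v: "v \<in> carrier_vec n"
  shows "(u \<bullet> v)\<^sup>2 \<le> (u \<bullet> u) * (v \<bullet> v)"
proof (cases "v \<bullet> v = 0")
  case True
  then have "v = 0\<^sub>v n" using scalar_prod_self_eq_0_iff[OF v] by simp
  then show ?thesis using u by simp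
next
  case False
  then have vv: "0 < v \<bullet> v" using scalar_prod_self_nonneg[of v] by simp
  define t where "t = (u \<bullet> v) / (v \<bullet> v)"
  have "0 \<le> (u - t \<cdot>\<^sub>v v) \<bullet> (u - t \<cdot>\<^sub>v v)" by (rule scalar_prod_self_nonneg)
  also have "\<dots> = u \<bullet> u - t * (u \<bullet> v) - (t * (v \<bullet> u) - t * (t * (v \<bullet> v)))"
    using u v by (simp add: minus_scalar_prod_distrib[of _ n] scalar_prod_minus_distrib[of _ n]
        right_diff_distrib)
  also have "\<dots> = u \<bullet> u - (u \<bullet> v)\<^sup>2 / (v \<bullet> v)"
    using vv comm_scalar_prod[OF v u] by (simp add: t_def field_simps power2_eq_square)
  finally show ?thesis using vv by (simp add: field_simps)
qed

lemma abs_scalar_prod_le_vnorm: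
  fixes u v :: "real vec"
  assumes "u \<in> carrier_vec n" "v \<in> carrier_vec n"
  shows "\<bar>u \<bullet> v\<bar> \<le> vnorm u * vnorm v"
proof -
  have "\<bar>u \<bullet> v\<bar> = sqrt ((u \<bullet> v)\<^sup>2)" by simp
  also have "\<dots> \<le> sqrt ((u \<bullet> u) * (v \<bullet> v))"
    using Cauchy_Schwarz_scalar_prod[OF assms] by (rule real_sqrt_le_mono)
  also have "\<dots> = vnorm u * vnorm v" by (simp add: vnorm_def real_sqrt_mult)
  finally show ?thesis .
qed

lemma bdd_above_op_norm:
  assumes "K \<in> carrier_mat r c"
  shows "bdd_above {vnorm (K *\<^sub>v v) | v. v \<in> carrier_vec (dim_col K) \<and> vnorm v \<le> 1}"
proof -
  define R where "R = (\<Sum>i<r. row K i \<bullet> row K i)"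
  have "vnorm (K *\<^sub>v v) \<le> sqrt R" if v: "v \<in> carrier_vec c" "vnorm v \<le> 1" for v
  proof -
    have vv: "v \<bullet> v \<le> 1" using power_le_one[OF vnorm_nonneg v(2), of 2] by (simp add: vnorm_power2)
    have "(K *\<^sub>v v) \<bullet> (K *\<^sub>v v) = (\<Sum>i<r. (row K i \<bullet> v)\<^sup>2)"
      using assms by (simp add: scalar_prod_def[of "K *\<^sub>v v"] lessThan_atLeast0 power2_eq_square)
    also have "\<dots> \<le> R" unfolding R_def
    proof (rule sum_mono)
      fix i assume "i \<in> {..<r}"
      then have "(row K i \<bullet> v)\<^sup>2 \<le> (row K i \<bullet> row K i) * (v \<bullet> v)"
        using assms v by (intro Cauchy_Schwarz_scalar_prod[of _ c]) auto
      also have "\<dots> \<le> row K i \<bullet> row K i"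
        using vv scalar_prod_self_nonneg[of "row K i"] by (simp add: mult_left_le)
      finally show "(row K i \<bullet> v)\<^sup>2 \<le> row K i \<bullet> row K i" .
    qed
    finally show ?thesis by (simp add: vnorm_def real_sqrt_le_mono)
  qed
  then show ?thesis using assms by (intro bdd_aboveI[of _ "sqrt R"]) auto
qed

lemma vnorm_mult_mat_vec_le:
  assumes K: "K \<in> carrier_mat r c" and v: "v \<in> carrier_vec c"
  shows "vnorm (K *\<^sub>v v) \<le> op_norm K * vnorm v"
proof (cases "v = 0\<^sub>v c")
  case True
  have "K *\<^sub>v 0\<^sub>v c = 0\<^sub>v r" by (rule eq_vecI) (use K in auto)
  then show ?thesis using True by (simp add: vnorm_def)
next
  case False
  then have pos: "0 < vnorm v"
    using v scalar_prod_self_eq_0_iff[OF v] scalar_prod_self_nonneg[of v] by (simp add: vnorm_def)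
  define u where "u = (1 / vnorm v) \<cdot>\<^sub>v v"
  have "u \<in> carrier_vec (dim_col K)" "vnorm u \<le> 1"
    using K v pos by (auto simp: u_def vnorm_smult)
  then have "vnorm (K *\<^sub>v u) \<le> op_norm K" unfolding op_norm_def
    by (intro cSup_upper[OF _ bdd_above_op_norm[OF K]]) auto
  moreover have "K *\<^sub>v u = (1 / vnorm v) \<cdot>\<^sub>v (K *\<^sub>v v)"
    using K v by (simp add: u_def mult_mat_vec)
  ultimately show ?thesis using pos by (simp add: vnorm_smult field_simps)
qed

lemma op_norm_nonneg:
  assumes "K \<in> carrier_mat r c"
  shows "0 \<le> op_norm K"
proof -
  have "vnorm (K *\<^sub>v 0\<^sub>v c) \<le> op_norm K" unfolding op_norm_def
    by (intro cSup_upper[OF _ bdd_above_op_norm[OF assms]]) (use assms in \<open>auto simp: vnorm_def\<close>)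
  then show ?thesis using vnorm_nonneg order_trans by blast
qed

lemma quad_form_le_op_norm:
  assumes "K \<in> carrier_mat n n" "v \<in> carrier_vec n"
  shows "v \<bullet> (K *\<^sub>v v) \<le> op_norm K * (v \<bullet> v)"
proof -
  have "v \<bullet> (K *\<^sub>v v) \<le> vnorm v * vnorm (K *\<^sub>v v)"
    using abs_scalar_prod_le_vnorm[of v n "K *\<^sub>v v"] assms by auto
  also have "\<dots> \<le> vnorm v * (op_norm K * vnorm v)"
    by (rule mult_left_mono[OF vnorm_mult_mat_vec_le[OF assms] vnorm_nonneg])
  also have "\<dots> = op_norm K * (v \<bullet> v)" by (simp add: vnorm_power2[symmetric] power2_eq_square)
  finally show ?thesis .
qed

section \<open>Inverses and positive semidefinite systems\<close>

lemma invertible_mat_det_nonzero: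
  fixes A :: "'a :: comm_ring_1 mat"
  assumes A: "A \<in> carrier_mat n n" and inv: "invertible_mat A"
  shows "det A \<noteq> 0"
proof -
  obtain B where AB: "A * B = 1\<^sub>m n" and BA: "B * A = 1\<^sub>m (dim_row B)"
    using inv A unfolding invertible_mat_def inverts_mat_def by auto
  have "dim_col B = n" using arg_cong[OF AB, of dim_col] by simp
  moreover have "dim_row B = n" using arg_cong[OF BA, of dim_col] A by simp
  ultimately have "B \<in> carrier_mat n n" by auto
  then have "det A * det B = 1" using det_mult[OF A] AB by (metis det_one)
  then show ?thesis by auto
qed

lemma mat_inv_inverse:
  assumes A: "A \<in> carrier_mat n n" and det: "det A \<noteq> 0"
  shows "mat_inv A \<in> carrier_mat n n" "A * mat_inv A = 1\<^sub>m n" "mat_inv A * A = 1\<^sub>m n"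
proof -
  have "A \<in> Units (ring_mat TYPE(real) n ())" by (rule det_non_zero_imp_unit[OF A det])
  then have "\<exists>B. B \<in> carrier_mat n n \<and> A * B = 1\<^sub>m n \<and> B * A = 1\<^sub>m n"
    unfolding Units_def ring_mat_def by auto
  from someI_ex[OF this] show "mat_inv A \<in> carrier_mat n n" "A * mat_inv A = 1\<^sub>m n" "mat_inv A * A = 1\<^sub>m n"
    using A unfolding mat_inv_def by auto
qed

lemma mat_inv_mult_vec:
  assumes "A \<in> carrier_mat n n" "det A \<noteq> 0" "v \<in> carrier_vec n"
  shows "mat_inv A *\<^sub>v v \<in> carrier_vec n" "A *\<^sub>v (mat_inv A *\<^sub>v v) = v"
  using assoc_mult_mat_vec[OF assms(1) mat_inv_inverse(1)[OF assms(1,2)] assms(3)]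
    mat_inv_inverse[OF assms(1,2)] assms(3) by auto

lemma scalar_prod_mult_mat_vec_sym:
  fixes P :: "'a :: comm_ring_1 mat"
  assumes "P \<in> carrier_mat n n" "transpose_mat P = P" "u \<in> carrier_vec n" "v \<in> carrier_vec n"
  shows "u \<bullet> (P *\<^sub>v v) = v \<bullet> (P *\<^sub>v u)"
proof -
  have "u \<bullet> (P *\<^sub>v v) = (transpose_mat P *\<^sub>v u) \<bullet> v"
    using transpose_vec_mult_scalar[OF assms(1,4,3)] by simp
  also have "\<dots> = v \<bullet> (P *\<^sub>v u)" using assms by (simp add: comm_scalar_prod[of _ n])
  finally show ?thesis .
qed

lemma sym_psd_add:
  assumes "sym_psd n A" "sym_psd n B"
  shows "sym_psd n (A + B)"
proof -
  have A: "A \<in> carrier_mat n n" and B: "B \<in> carrier_mat n n" using assms by (auto simp: sym_psd_def)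
  have "v \<bullet> ((A + B) *\<^sub>v v) = v \<bullet> (A *\<^sub>v v) + v \<bullet> (B *\<^sub>v v)" if "v \<in> carrier_vec n" for v
    using A B that by (simp add: add_mult_distrib_mat_vec scalar_prod_add_distrib[of _ n])
  then show ?thesis using assms A B by (auto simp: sym_psd_def transpose_add intro: add_nonneg_nonneg)
qed

lemma sym_psd_completing_square:
  assumes B: "sym_psd n B" and w: "w \<in> carrier_vec n" and y: "y \<in> carrier_vec n"
  shows "2 * (y \<bullet> (B *\<^sub>v w)) - y \<bullet> (B *\<^sub>v y) \<le> w \<bullet> (B *\<^sub>v w)"
proof -
  have Bc: "B \<in> carrier_mat n n" and BT: "transpose_mat B = B" using B by (auto simp: sym_psd_def)
  have "0 \<le> (y - w) \<bullet> (B *\<^sub>v (y - w))" using B y w by (simp add: sym_psd_def)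
  also have "\<dots> = y \<bullet> (B *\<^sub>v y) - y \<bullet> (B *\<^sub>v w) - (w \<bullet> (B *\<^sub>v y) - w \<bullet> (B *\<^sub>v w))"
    using Bc y w by (simp add: mult_minus_distrib_mat_vec minus_scalar_prod_distrib[of _ n]
        scalar_prod_minus_distrib[of _ n])
  also have "\<dots> = y \<bullet> (B *\<^sub>v y) - 2 * (y \<bullet> (B *\<^sub>v w)) + w \<bullet> (B *\<^sub>v w)"
    using scalar_prod_mult_mat_vec_sym[OF Bc BT w y] by simp
  finally show ?thesis by simp
qed

lemma sym_psd_solution_perturbation:
  assumes P: "sym_psd n P" and E: "sym_psd n E"
    and z: "z \<in> carrier_vec n" and w: "w \<in> carrier_vec n"
    and Pz: "P *\<^sub>v z = x" and PEw: "(P + E) *\<^sub>v w = x"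
  shows "0 \<le> x \<bullet> z - x \<bullet> w" and "x \<bullet> z - x \<bullet> w \<le> z \<bullet> (E *\<^sub>v z)"
proof -
  have Pc: "P \<in> carrier_mat n n" and Ec: "E \<in> carrier_mat n n" using P E by (auto simp: sym_psd_def)
  have x: "x \<in> carrier_vec n" using Pz Pc z by auto
  have split: "u \<bullet> ((P + E) *\<^sub>v v) = u \<bullet> (P *\<^sub>v v) + u \<bullet> (E *\<^sub>v v)"
    if "u \<in> carrier_vec n" "v \<in> carrier_vec n" for u v
    using Pc Ec that by (simp add: add_mult_distrib_mat_vec scalar_prod_add_distrib[of _ n])
  have xz: "z \<bullet> (P *\<^sub>v z) = x \<bullet> z" and xw: "w \<bullet> ((P + E) *\<^sub>v w) = x \<bullet> w"
    and zw: "z \<bullet> ((P + E) *\<^sub>v w) = x \<bullet> z" and wz: "w \<bullet> (P *\<^sub>v z) = x \<bullet> w"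
    using Pz PEw x z w by (simp_all add: comm_scalar_prod[of _ n])
  have "0 \<le> w \<bullet> (E *\<^sub>v w)" using E w by (simp add: sym_psd_def)
  moreover have "2 * (w \<bullet> (P *\<^sub>v z)) - w \<bullet> (P *\<^sub>v w) \<le> z \<bullet> (P *\<^sub>v z)"
    by (rule sym_psd_completing_square[OF P z w])
  ultimately show "0 \<le> x \<bullet> z - x \<bullet> w" using split[OF w w] xz xw wz by linarith
  have "2 * (z \<bullet> ((P + E) *\<^sub>v w)) - z \<bullet> ((P + E) *\<^sub>v z) \<le> w \<bullet> ((P + E) *\<^sub>v w)"
    by (rule sym_psd_completing_square[OF sym_psd_add[OF P E] w z])
  then show "x \<bullet> z - x \<bullet> w \<le> z \<bullet> (E *\<^sub>v z)" using split[OF z z] xz xw zw by linarith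
qed

(* No sign condition on c is needed: for c = 0 the claim reads 0 <= w . B w. *)
lemma sym_psd_solution_lower_bound:
  assumes B: "sym_psd n B" and w: "w \<in> carrier_vec n" and q: "q \<in> carrier_vec n"
    and bound: "q \<bullet> (B *\<^sub>v q) \<le> c * (q \<bullet> (B *\<^sub>v w))"
  shows "q \<bullet> (B *\<^sub>v w) / c \<le> w \<bullet> (B *\<^sub>v w)"
proof -
  have Bc: "B \<in> carrier_mat n n" using B by (simp add: sym_psd_def)
  define s where "s = q \<bullet> (B *\<^sub>v w)"
  have "(1 / c)\<^sup>2 * (q \<bullet> (B *\<^sub>v q)) \<le> (1 / c)\<^sup>2 * (c * s)"
    using bound by (intro mult_left_mono) (simp_all add: s_def)
  also have "\<dots> = s / c" by (simp add: power2_eq_square)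
  finally have "s / c \<le> 2 * ((1 / c \<cdot>\<^sub>v q) \<bullet> (B *\<^sub>v w)) - (1 / c \<cdot>\<^sub>v q) \<bullet> (B *\<^sub>v (1 / c \<cdot>\<^sub>v q))"
    using Bc w q by (simp add: s_def mult_mat_vec power2_eq_square)
  also have "\<dots> \<le> w \<bullet> (B *\<^sub>v w)"
    using q by (intro sym_psd_completing_square[OF B w]) simp
  finally show ?thesis by (simp add: s_def)
qed

section \<open>Symmetric matrices whose range is a coordinate subspace\<close>

lemma mult_mat_vec_in_mat_range:
  "M \<in> carrier_mat n n \<Longrightarrow> v \<in> carrier_vec n \<Longrightarrow> M *\<^sub>v v \<in> mat_range M"
  by (auto simp: mat_range_def)

lemma mult_extend_vec_eq:
  assumes M: "M \<in> carrier_mat n n" and J: "J \<subseteq> {..<n}"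
    and range: "mat_range M \<subseteq> coord_subspace n J" and x: "x \<in> coord_subspace n J"
    and a: "a \<in> carrier_vec (card J)" and Aa: "submatrix M J J *\<^sub>v a = restrict_vec x J"
  shows "M *\<^sub>v extend_vec n J a = x"
proof -
  have "extend_vec n J a \<in> carrier_vec n"
    using extend_vec_coord_subspace by (simp add: coord_subspace_def)
  then have Mz: "M *\<^sub>v extend_vec n J a \<in> coord_subspace n J"
    using range mult_mat_vec_in_mat_range[OF M] by auto
  have "restrict_vec (M *\<^sub>v extend_vec n J a) J = restrict_vec x J"
    using restrict_mult_mat_vec[OF M J extend_vec_coord_subspace] restrict_extend_vec[OF J a] Aa
    by simp
  then show ?thesis using extend_restrict_vec[OF J Mz] extend_restrict_vec[OF J x] by metis
qed

lemma det_submatrix_nonzero: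
  assumes M: "M \<in> carrier_mat n n" and MT: "transpose_mat M = M" and J: "J \<subseteq> {..<n}"
    and range: "mat_range M = coord_subspace n J"
  shows "det (submatrix M J J) \<noteq> 0"
proof
  assume "det (submatrix M J J) = 0"
  then obtain a where a: "a \<in> carrier_vec (card J)" "a \<noteq> 0\<^sub>v (card J)"
    and Aa: "submatrix M J J *\<^sub>v a = 0\<^sub>v (card J)"
    using det_0_iff_vec_prod_zero_field[OF submatrix_carrier[OF M J J]] by auto
  define z where "z = extend_vec n J a"
  have zJ: "z \<in> coord_subspace n J" by (simp add: z_def extend_vec_coord_subspace)
  then have z: "z \<in> carrier_vec n" by (simp add: coord_subspace_def)
  have "z \<in> mat_range M" using zJ range by simp
  then obtain y where y: "y \<in> carrier_vec n" and My: "M *\<^sub>v y = z"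
    using M unfolding mat_range_def by auto
  have MzJ: "M *\<^sub>v z \<in> coord_subspace n J" using range mult_mat_vec_in_mat_range[OF M z] by simp
  have "(M *\<^sub>v z) \<bullet> (M *\<^sub>v z) = restrict_vec (M *\<^sub>v z) J \<bullet> restrict_vec (M *\<^sub>v z) J"
    using scalar_prod_restrict_vec[OF J _ MzJ] M z by simp
  also have "\<dots> = 0"
    using restrict_mult_mat_vec[OF M J zJ] restrict_extend_vec[OF J a(1)] Aa by (simp add: z_def)
  finally have "M *\<^sub>v z = 0\<^sub>v n" using scalar_prod_self_eq_0_iff[of "M *\<^sub>v z" n] M z by simp
  have "z \<bullet> z = y \<bullet> (M *\<^sub>v z)" using scalar_prod_mult_mat_vec_sym[OF M MT y z] My by simp
  then have "z \<bullet> z = 0" using \<open>M *\<^sub>v z = 0\<^sub>v n\<close> y by simp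
  moreover have "z \<bullet> z = a \<bullet> a"
    using scalar_prod_extend_vec[OF J z a(1)] restrict_extend_vec[OF J a(1)] by (simp add: z_def)
  ultimately show False using a scalar_prod_self_eq_0_iff[OF a(1)] by simp
qed

lemma mult_mat_vec_eq_0_off_support:
  assumes M: "M \<in> carrier_mat n n" and MT: "transpose_mat M = M"
    and range: "mat_range M \<subseteq> coord_subspace n J" and q: "q \<in> coord_subspace n ({..<n} - J)"
  shows "M *\<^sub>v q = 0\<^sub>v n"
proof -
  have qc: "q \<in> carrier_vec n" using q by (simp add: coord_subspace_def)
  define p where "p = M *\<^sub>v q"
  have p: "p \<in> carrier_vec n" using M qc by (simp add: p_def)
  have Mp: "M *\<^sub>v p \<in> coord_subspace n J" using range mult_mat_vec_in_mat_range[OF M p] by auto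
  have "p \<bullet> p = q \<bullet> (M *\<^sub>v p)" using scalar_prod_mult_mat_vec_sym[OF M MT qc p] by (simp add: p_def)
  also have "\<dots> = 0" using scalar_prod_disjoint_coord_subspaces[OF q Mp] by auto
  finally show ?thesis using scalar_prod_self_eq_0_iff[OF p] by (simp add: p_def)
qed

lemma inverse_quad_form_on_range:
  assumes M: "sym_psd n M" and Xi: "sym_psd n Xi" and J: "J \<subseteq> {..<n}"
    and range: "mat_range M = coord_subspace n J" and inv: "invertible_mat (M + Xi)"
    and x: "x \<in> mat_range M"
  shows "\<bar>x \<bullet> (mat_inv (M + Xi) *\<^sub>v x)
           - restrict_vec x J \<bullet> (mat_inv (submatrix M J J) *\<^sub>v restrict_vec x J)\<bar>
         \<le> (op_norm (mat_inv (submatrix M J J)))\<^sup>2 * op_norm Xi * (vnorm x)\<^sup>2"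
proof -
  have Mc: "M \<in> carrier_mat n n" and MT: "transpose_mat M = M" and Xc: "Xi \<in> carrier_mat n n"
    using M Xi by (auto simp: sym_psd_def)
  have Bc: "M + Xi \<in> carrier_mat n n" using Mc Xc by simp
  note B = Bc invertible_mat_det_nonzero[OF Bc inv]
  define A where "A = submatrix M J J"
  have A: "A \<in> carrier_mat (card J) (card J)" "det A \<noteq> 0"
    using submatrix_carrier[OF Mc J J] det_submatrix_nonzero[OF Mc MT J range] by (simp_all add: A_def)
  have xJ: "x \<in> coord_subspace n J" using x range by simp
  then have xc: "x \<in> carrier_vec n" by (simp add: coord_subspace_def)
  define r where "r = restrict_vec x J"
  have r: "r \<in> carrier_vec (card J)" using restrict_vec_carrier[OF xc J] by (simp add: r_def)
  define a where "a = mat_inv A *\<^sub>v r"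
  have a: "a \<in> carrier_vec (card J)" "A *\<^sub>v a = r" using mat_inv_mult_vec[OF A r] by (simp_all add: a_def)
  define z where "z = extend_vec n J a"
  have z: "z \<in> carrier_vec n" using extend_vec_coord_subspace by (simp add: z_def coord_subspace_def)
  have Mz: "M *\<^sub>v z = x"
    using mult_extend_vec_eq[OF Mc J _ xJ a(1)] a(2) range by (simp add: z_def A_def r_def)
  define w where "w = mat_inv (M + Xi) *\<^sub>v x"
  have w: "w \<in> carrier_vec n" "(M + Xi) *\<^sub>v w = x" using mat_inv_mult_vec[OF B xc] by (simp_all add: w_def)
  have "z \<bullet> (Xi *\<^sub>v z) \<le> op_norm Xi * (vnorm a)\<^sup>2"
    using quad_form_le_op_norm[OF Xc z] scalar_prod_extend_vec[OF J z a(1)] restrict_extend_vec[OF J a(1)]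
    by (simp add: z_def vnorm_power2)
  also have "\<dots> \<le> op_norm Xi * (op_norm (mat_inv A) * vnorm r)\<^sup>2"
    using vnorm_mult_mat_vec_le[OF mat_inv_inverse(1)[OF A] r] op_norm_nonneg[OF Xc]
    by (intro mult_left_mono power_mono) (simp_all add: a_def vnorm_nonneg)
  also have "vnorm r = vnorm x"
    using scalar_prod_restrict_vec[OF J xc xJ] by (simp add: vnorm_def r_def)
  finally have "z \<bullet> (Xi *\<^sub>v z) \<le> (op_norm (mat_inv A))\<^sup>2 * op_norm Xi * (vnorm x)\<^sup>2"
    by (simp add: power_mult_distrib ac_simps)
  moreover have "x \<bullet> z = r \<bullet> a" using scalar_prod_extend_vec[OF J xc a(1)] by (simp add: z_def r_def)
  ultimately show ?thesis
    using sym_psd_solution_perturbation[OF M Xi z w(1) Mz w(2)] by (simp add: A_def a_def r_def w_def)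
qed

lemma inverse_quad_form_off_range:
  assumes M: "sym_psd n M" and Xi: "sym_psd n Xi" and J: "J \<subseteq> {..<n}"
    and range: "mat_range M \<subseteq> coord_subspace n J" and inv: "invertible_mat (M + Xi)"
    and x: "x \<in> carrier_vec n"
  shows "(vnorm (restrict_vec x ({..<n} - J)))\<^sup>2 / op_norm Xi \<le> x \<bullet> (mat_inv (M + Xi) *\<^sub>v x)"
proof -
  have Mc: "M \<in> carrier_mat n n" and MT: "transpose_mat M = M" and Xc: "Xi \<in> carrier_mat n n"
    using M Xi by (auto simp: sym_psd_def)
  have Bc: "M + Xi \<in> carrier_mat n n" using Mc Xc by simp
  note B = Bc invertible_mat_det_nonzero[OF Bc inv]
  define w where "w = mat_inv (M + Xi) *\<^sub>v x"
  have w: "w \<in> carrier_vec n" "(M + Xi) *\<^sub>v w = x" using mat_inv_mult_vec[OF B x] by (simp_all add: w_def)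
  define S where "S = {..<n} - J"
  have S: "S \<subseteq> {..<n}" by (auto simp: S_def)
  have r: "restrict_vec x S \<in> carrier_vec (card S)" by (rule restrict_vec_carrier[OF x S])
  define q where "q = extend_vec n S (restrict_vec x S)"
  have qS: "q \<in> coord_subspace n S" by (simp add: q_def extend_vec_coord_subspace)
  then have q: "q \<in> carrier_vec n" by (simp add: coord_subspace_def)
  have xq: "q \<bullet> ((M + Xi) *\<^sub>v w) = (vnorm (restrict_vec x S))\<^sup>2"
    using scalar_prod_extend_vec[OF S x r] comm_scalar_prod[OF q x] w(2)
    by (simp add: q_def vnorm_power2)
  have qq: "q \<bullet> q = (vnorm (restrict_vec x S))\<^sup>2"
    using scalar_prod_extend_vec[OF S q r] restrict_extend_vec[OF S r] by (simp add: q_def vnorm_power2)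
  have "M *\<^sub>v q = 0\<^sub>v n" using mult_mat_vec_eq_0_off_support[OF Mc MT range] qS by (simp add: S_def)
  then have "q \<bullet> ((M + Xi) *\<^sub>v q) = q \<bullet> (Xi *\<^sub>v q)"
    using Mc Xc q by (simp add: add_mult_distrib_mat_vec)
  also have "\<dots> \<le> op_norm Xi * (q \<bullet> ((M + Xi) *\<^sub>v w))"
    using quad_form_le_op_norm[OF Xc q] by (simp add: xq qq)
  finally have "q \<bullet> ((M + Xi) *\<^sub>v w) / op_norm Xi \<le> w \<bullet> ((M + Xi) *\<^sub>v w)"
    by (rule sym_psd_solution_lower_bound[OF sym_psd_add[OF M Xi] w(1) q])
  then show ?thesis using xq w(2) comm_scalar_prod[OF w(1) x] by (simp add: S_def w_def)
qed

theorem lemmaE8: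
  fixes l :: nat and M Xi :: "real mat" and J :: "nat set"
  assumes "sym_psd l M" and "sym_psd l Xi"
    and "J \<subseteq> {..<l}"
    and "mat_range M = coord_subspace l J"
    and "op_norm Xi \<le> lambda_min (submatrix M J J) / 2"
    and "invertible_mat (M + Xi)"
  shows "(\<forall>x \<in> mat_range M.
            \<bar>x \<bullet> (mat_inv (M + Xi) *\<^sub>v x)
              - restrict_vec x J \<bullet> (mat_inv (submatrix M J J) *\<^sub>v restrict_vec x J)\<bar>
            \<le> 2 * (op_norm (mat_inv (submatrix M J J)))\<^sup>2 * op_norm Xi * (vnorm x)\<^sup>2)
       \<and> (\<forall>x \<in> carrier_vec l. x \<notin> mat_range M \<longrightarrow>
            x \<bullet> (mat_inv (M + Xi) *\<^sub>v x)
              \<ge> 1 / (2 * op_norm Xi) * (vnorm (restrict_vec x ({..<l} - J)))\<^sup>2)"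
proof -
  have Xi_nonneg: "0 \<le> op_norm Xi" using assms(2) op_norm_nonneg by (auto simp: sym_psd_def)
  have "\<bar>x \<bullet> (mat_inv (M + Xi) *\<^sub>v x)
          - restrict_vec x J \<bullet> (mat_inv (submatrix M J J) *\<^sub>v restrict_vec x J)\<bar>
        \<le> 2 * (op_norm (mat_inv (submatrix M J J)))\<^sup>2 * op_norm Xi * (vnorm x)\<^sup>2"
    if "x \<in> mat_range M" for x
    using inverse_quad_form_on_range[OF assms(1-4,6) that] Xi_nonneg by (simp add: mult.assoc)
  moreover have "1 / (2 * op_norm Xi) * (vnorm (restrict_vec x ({..<l} - J)))\<^sup>2
        \<le> x \<bullet> (mat_inv (M + Xi) *\<^sub>v x)" if "x \<in> carrier_vec l" for x
  proof -
    have "(vnorm (restrict_vec x ({..<l} - J)))\<^sup>2 / op_norm Xi \<le> x \<bullet> (mat_inv (M + Xi) *\<^sub>v x)"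
      by (rule inverse_quad_form_off_range[OF assms(1-3) _ assms(6) that]) (use assms(4) in simp)
    then show ?thesis
      using Xi_nonneg by (elim order_trans[rotated]) (cases "op_norm Xi = 0"; simp add: divide_left_mono)
  qed
  ultimately show ?thesis by blast
qed

end
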